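(* Let $d>2$ be a prime such that $-1\in QNR_d$ and $2\in QNR_d$. Then the equation $$d=\left(\frac{k}{2j}\right)^2\frac{m^2-e^2}{em}$$ has no solutions $k,j,m,e\in\mathbb{N}$ with $\gcd(m,e)=1$ and $m>e>0$.
   Context: For an odd prime $d$, $QR_d$ is the set of nonzero quadratic residues modulo $d$ in $\{1,\dots,d-1\}$, and $QNR_d=\{1,\dots,d-1\}\setminus QR_d$ is the set of quadratic nonresidues modulo $d$ (residues taken mod $d$). *)

theory Defs
  imports "HOL-Number_Theory.Number_Theory"
begin

definition QR :: "nat \<Rightarrow> nat set" where
  "QR d = {a \<in> {1..d-1}. \<exists>x::nat. [x^2 = a] (mod d)}"

definition QNR :: "nat \<Rightarrow> nat set" where
  "QNR d = {1..d-1} - QR d"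

definition in_res :: "int \<Rightarrow> nat \<Rightarrow> nat set \<Rightarrow> bool" where
  "in_res a d S \<longleftrightarrow> nat (a mod int d) \<in> S"

end

theory Submission
  imports Defs "HOL-Computational_Algebra.Nth_Powers"
begin

text \<open>
  Writing \<open>u = k(m\<^sup>2 + e\<^sup>2)\<close>, \<open>s = k(m\<^sup>2 - e\<^sup>2 + 2em)\<close>, \<open>r = k|m\<^sup>2 - e\<^sup>2 - 2em|\<close> and
  \<open>w = 4jem\<close>, a solution makes \<open>r\<^sup>2, u\<^sup>2, s\<^sup>2\<close> an arithmetic progression with common
  difference \<open>d w\<^sup>2\<close>.
  Such progressions are excluded by Fermat's descent on \<open>w\<close>. After cancelling \<open>gcd(u, w)\<close>,
  a parity argument gives \<open>w = 2c\<close>, and \<open>(s - r)/2\<close>, \<open>(s + r)/2\<close> are the legs of a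
  primitive Pythagorean triple with hypotenuse \<open>u\<close> and product \<open>2dc\<^sup>2\<close>. Splitting the
  legs into squares according to parity and to which leg \<open>d\<close> divides, one case yields a
  progression of the same kind with a smaller \<open>w\<close>, while the other contradicts the
  hypotheses, which enter only as: \<open>d | x\<^sup>2 + y\<^sup>2\<close> forces \<open>d | x\<close> (as \<open>-1\<close> is a
  nonresidue) and \<open>y\<^sup>2 \<equiv> 2x\<^sup>2 (mod d)\<close> forces \<open>d | x\<close> (as \<open>2\<close> is a nonresidue).
\<close>

lemma nonresidue_square_cong_imp_dvd:
  fixes x y a :: int and d :: nat
  assumes d: "prime d" and a: "in_res a d (QNR d)" and cong: "[y^2 = a * x^2] (mod int d)"
  shows "int d dvd x"
proof (rule ccontr)
  assume "\<not> int d dvd x"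
  moreover have "prime (int d)" using d by simp
  ultimately have "coprime x (int d)"
    using prime_imp_coprime coprime_commute by blast
  then obtain x' where inv: "[x * x' = 1] (mod int d)"
    using cong_solve_coprime_int by blast
  define z where "z = y * x' mod int d"
  have "[z^2 = (y * x')^2] (mod int d)"
    unfolding z_def by (intro cong_pow) (simp add: cong_def)
  also have "(y * x')^2 = y^2 * x'^2" by (rule power_mult_distrib)
  also have "[y^2 * x'^2 = a * (x * x')^2] (mod int d)"
    using cong_mult[OF cong cong_refl, of "x'^2"] by (simp add: power_mult_distrib ac_simps)
  also have "[a * (x * x')^2 = a * 1^2] (mod int d)"
    by (intro cong_mult cong_pow inv cong_refl)
  also have "[a * 1^2 = a mod int d] (mod int d)" by (simp add: cong_def)
  finally have "[int (nat z ^ 2) = int (nat (a mod int d))] (mod int d)"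
    using d prime_gt_0_nat z_def by simp
  then have "[nat z ^ 2 = nat (a mod int d)] (mod d)"
    using cong_int_iff by blast
  moreover have "nat (a mod int d) \<in> {1..d-1} - QR d"
    using a unfolding in_res_def QNR_def .
  ultimately show False unfolding QR_def by blast
qed

lemma coprime_mult_eq_power_nat:
  fixes a b c n :: nat
  assumes "coprime a b" "a * b = c ^ n" "n > 0"
  shows "\<exists>x. a = x ^ n"
proof -
  consider "a = 0" | "b = 0" | "a > 0" "b > 0" by blast
  then show ?thesis
  proof cases
    case 1 then show ?thesis using assms(3) by (intro exI[of _ 0]) simp
  next
    case 2 then show ?thesis using assms(1) by (intro exI[of _ 1]) simp
  next
    case 3
    then have "is_nth_power n a"
      using is_nth_power_mult_coprime_natD(1)[OF assms(1)] assms(2) by auto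
    then show ?thesis by (auto elim: is_nth_powerE)
  qed
qed

lemma coprime_mult_eq_mult_square:
  fixes a b c q :: nat
  assumes "coprime a b" "a * b = q * c^2" "q dvd b" "q > 0"
  shows "\<exists>x y. a = x^2 \<and> b = q * y^2"
proof -
  obtain b' where b: "b = q * b'" using assms(3) by blast
  have "a * b' = c^2" "coprime a b'" using assms b by (simp_all add: ac_simps)
  then obtain x y where "a = x^2" "b' = y^2"
    using coprime_mult_eq_power_nat[of a b' c 2] coprime_mult_eq_power_nat[of b' a c 2]
    by (auto simp: ac_simps coprime_commute)
  then show ?thesis using b by blast
qed

lemma coprime_mult_eq_prime_square_mult_fourth_power:
  fixes a b c d :: nat
  assumes d: "prime d" and cp: "coprime a b" and eq: "a * b = d^2 * c^4" and "d dvd a"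
  shows "\<exists>x y. a = d^2 * x^4 \<and> b = y^4"
proof -
  obtain a1 where a1: "a = d * a1" using \<open>d dvd a\<close> by blast
  have "d > 0" using d prime_gt_0_nat by blast
  then have eq1: "a1 * b = d * c^4" using eq a1 by (simp add: power2_eq_square algebra_simps)
  have "\<not> d dvd b"
    using cp \<open>d dvd a\<close> d by (meson coprime_common_divisor not_prime_unit)
  then have "d dvd a1" using eq1 d by (metis dvd_triv_left prime_dvd_mult_iff)
  then obtain a2 where a2: "a1 = d * a2" by blast
  have "a2 * b = c^4" "coprime a2 b" using eq1 a2 \<open>d > 0\<close> cp a1 by simp_all
  then obtain x y where "a2 = x^4" "b = y^4"
    using coprime_mult_eq_power_nat[of a2 b c 4] coprime_mult_eq_power_nat[of b a2 c 4]
    by (auto simp: ac_simps coprime_commute)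
  then show ?thesis using a1 a2 by (auto simp: power2_eq_square)
qed

lemma coprime_diff_add_if_odd:
  fixes a b :: nat
  assumes "coprime a b" "odd (a + b)" "b \<le> a"
  shows "coprime (a - b) (a + b)"
proof (rule coprimeI)
  fix g assume g: "g dvd a - b" "g dvd a + b"
  have "a + b = (a - b) + 2 * b" using \<open>b \<le> a\<close> by simp
  then have "g dvd 2 * b" using g by (metis dvd_add_right_iff)
  moreover have "odd g" using g(2) \<open>odd (a + b)\<close> dvd_trans by blast
  ultimately have "g dvd b" by (simp add: coprime_dvd_mult_right_iff)
  moreover from this have "g dvd a" using g(2) by (simp add: dvd_add_left_iff)
  ultimately show "is_unit g" using \<open>coprime a b\<close> coprime_common_divisor by blast
qed

lemma coprime_pythagorean_halves:
  fixes a b c u :: nat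
  assumes cp: "coprime a b" and pyth: "u^2 = a^2 + b^2" and "odd u" and b: "b = 2 * c"
  shows "\<exists>p. u = a + 2 * p \<and> p * (p + a) = c^2 \<and> coprime p (p + a)"
proof -
  have "odd (a^2 + b^2)" using pyth \<open>odd u\<close> by (metis even_power zero_less_numeral)
  then have "odd a" using b by simp
  have "a^2 \<le> u^2" using pyth by simp
  then have "a \<le> u" using power2_le_imp_le by blast
  moreover have "even (u - a)" using \<open>odd u\<close> \<open>odd a\<close> \<open>a \<le> u\<close> by simp
  ultimately obtain p where u: "u = a + 2 * p" by (metis le_add_diff_inverse evenE)
  have "4 * (p * (p + a)) = 4 * c^2" using pyth u b by (simp add: power2_eq_square algebra_simps)
  then have prod: "p * (p + a) = c^2" by simp
  have "coprime p (p + a)"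
  proof (rule coprimeI)
    fix g assume g: "g dvd p" "g dvd p + a"
    then have "g dvd a" by (simp add: dvd_add_right_iff)
    moreover have "g dvd u" using g(1) \<open>g dvd a\<close> u by simp
    ultimately have "g^2 dvd b^2" using pyth by (metis dvd_add_right_iff dvd_power_same)
    then have "g dvd b" by simp
    then show "is_unit g" using \<open>g dvd a\<close> cp coprime_common_divisor by blast
  qed
  then show ?thesis using u prod by blast
qed

lemma coprime_pythagorean_sum_diff_squares:
  fixes a b c :: nat
  assumes cp: "coprime a b" and "odd (a + b)" and pyth: "a^2 = b^2 + c^2"
  shows "\<exists>x y. a = x^2 + b \<and> y^2 = a + b"
proof -
  have "b^2 \<le> a^2" using pyth by simp
  then have "b \<le> a" using power2_le_imp_le by blast
  then obtain t where a: "a = b + t" using le_Suc_ex by blast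
  then have "t * (a + b) = c^2" using pyth by (simp add: power2_eq_square algebra_simps)
  moreover have "coprime t (a + b)" using coprime_diff_add_if_odd assms \<open>b \<le> a\<close> a by fastforce
  ultimately obtain x y where "t = x^2" "a + b = y^2"
    using coprime_mult_eq_power_nat[of t "a + b" c 2] coprime_mult_eq_power_nat[of "a + b" t c 2]
    by (auto simp: ac_simps coprime_commute)
  then show ?thesis using a by auto
qed

definition square_progression :: "nat \<Rightarrow> nat \<Rightarrow> nat \<Rightarrow> nat \<Rightarrow> nat \<Rightarrow> bool" where
  "square_progression d w r u s \<longleftrightarrow> u^2 = r^2 + d * w^2 \<and> s^2 = u^2 + d * w^2"

lemma square_progression_div:
  assumes sp: "square_progression d w r u s" and "g dvd u" "g dvd w"
  shows "square_progression d (w div g) (r div g) (u div g) (s div g)"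
proof -
  obtain u' w' where u: "u = g * u'" and w: "w = g * w'" using assms(2,3) by blast
  have "g^2 dvd u^2" "g^2 dvd d * w^2" unfolding u w by (simp_all add: power_mult_distrib)
  then have "g^2 dvd r^2" using sp unfolding square_progression_def by (metis dvd_add_left_iff)
  then have "g dvd r" by simp
  then obtain r' where r: "r = g * r'" by blast
  have "g^2 dvd s^2" using sp \<open>g^2 dvd u^2\<close> \<open>g^2 dvd d * w^2\<close>
    unfolding square_progression_def by simp
  then have "g dvd s" by simp
  then obtain s' where s: "s = g * s'" by blast
  show ?thesis
  proof (cases "g = 0")
    case False
    have "g^2 * u'^2 = g^2 * (r'^2 + d * w'^2)" "g^2 * s'^2 = g^2 * (u'^2 + d * w'^2)"
      using sp unfolding u w r s square_progression_def by (simp_all add: power_mult_distrib algebra_simps)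
    then show ?thesis using False unfolding u w r s square_progression_def by simp
  qed (simp add: square_progression_def)
qed

lemma square_progression_even:
  assumes "odd d" "square_progression d w r u s"
  shows "even w"
proof (rule ccontr)
  assume "odd w"
  then have "odd (d * w^2)" using \<open>odd d\<close> by simp
  then obtain k where k: "d * w^2 = 2 * k + 1" by (rule oddE)
  have sq_mod_4: "x^2 mod 4 = 0 \<or> x^2 mod 4 = 1" for x :: nat
  proof (cases "even x")
    case False
    then obtain b where "x = 2 * b + 1" by (rule oddE)
    then have "x^2 = 4 * (b^2 + b) + 1" by (simp add: power2_eq_square algebra_simps)
    then show ?thesis by simp
  qed (auto elim!: evenE simp: power2_eq_square)
  have "s^2 = r^2 + 4 * k + 2" using assms(2) k unfolding square_progression_def by simp
  then show False using sq_mod_4[of r] sq_mod_4[of s] by presburger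
qed

lemma square_progression_pythagorean:
  fixes d c r u s :: nat
  assumes d: "prime d" and "odd u" and "coprime u c" and "c > 0"
    and sp: "square_progression d (2 * c) r u s"
  shows "\<exists>\<alpha> \<beta>. coprime \<alpha> \<beta> \<and> u^2 = \<alpha>^2 + \<beta>^2 \<and> \<alpha> * \<beta> = 2 * d * c^2"
proof -
  have "d > 1" using d prime_gt_1_nat by blast
  have r: "u^2 = r^2 + 4 * d * c^2" and s: "s^2 = u^2 + 4 * d * c^2"
    using sp by (simp_all add: square_progression_def power_mult_distrib)
  have "odd (u^2)" using \<open>odd u\<close> by simp
  then have "odd (r^2 + 4 * d * c^2)" "odd (s^2)" using r s by simp_all
  then have "odd r" "odd s" by simp_all
  have "r^2 < s^2" using r s \<open>d > 1\<close> \<open>c > 0\<close> by simp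
  then have "r < s" using power_less_imp_less_base by blast
  moreover have "even (s - r)" using \<open>odd r\<close> \<open>odd s\<close> \<open>r < s\<close> by simp
  ultimately obtain \<alpha> where s_eq: "s = r + 2 * \<alpha>" by (metis le_add_diff_inverse less_imp_le evenE)
  define \<beta> where "\<beta> = \<alpha> + r"
  have "4 * (\<alpha> * \<beta>) = 4 * (2 * d * c^2)"
    using r s s_eq unfolding \<beta>_def by (simp add: power2_eq_square algebra_simps)
  then have prod: "\<alpha> * \<beta> = 2 * d * c^2" by simp
  have "2 * u^2 = 2 * (\<alpha>^2 + \<beta>^2)"
    using r s s_eq unfolding \<beta>_def by (simp add: power2_eq_square algebra_simps)
  then have pyth: "u^2 = \<alpha>^2 + \<beta>^2" by simp
  have "coprime \<alpha> \<beta>"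
  proof (rule coprimeI)
    fix g assume g: "g dvd \<alpha>" "g dvd \<beta>"
    then have "g dvd s" using s_eq unfolding \<beta>_def by (simp add: dvd_add_right_iff)
    then have "coprime (g^2) 2" using \<open>odd s\<close> dvd_trans by auto
    have "g^2 dvd u^2" using g pyth by simp
    then have "g dvd u" by simp
    then have "coprime (g^2) (c^2)" using \<open>coprime u c\<close> coprime_imp_coprime dvd_trans by auto
    have "g^2 dvd 2 * (d * c^2)" using g prod by (metis mult.assoc mult_dvd_mono power2_eq_square)
    then have "g^2 dvd d"
      using \<open>coprime (g^2) 2\<close> \<open>coprime (g^2) (c^2)\<close>
      by (simp add: coprime_dvd_mult_left_iff coprime_dvd_mult_right_iff)
    then have "g dvd d" using dvd_trans dvd_triv_left power2_eq_square by metis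
    then have "g = 1 \<or> g = d" using d by (simp add: prime_nat_iff)
    moreover have "\<not> d^2 dvd d" using \<open>d > 1\<close> by (simp add: power2_eq_square)
    ultimately show "is_unit g" using \<open>g^2 dvd d\<close> by auto
  qed
  then show ?thesis using pyth prod by blast
qed

lemma rational_solution_square_progression:
  fixes d k j m e :: nat
  assumes "j > 0" "e > 0" "e < m"
    and eq: "real d = (real k / (2 * real j))^2 * ((real m ^ 2 - real e ^ 2) / (real e * real m))"
  shows "\<exists>w r u s. w > 0 \<and> square_progression d w r u s"
proof -
  define D where "D = real m^2 - real e^2"
  define R where "R = int k * (int m^2 - int e^2 - 2 * int e * int m)"
  define r u s where "r = nat \<bar>R\<bar>" and "u = k * (m^2 + e^2)" and "s = k * (m^2 + 2 * e * m - e^2)"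
  have "real d * (4 * real j^2 * real e * real m) = real k^2 * D"
    using eq assms unfolding D_def by (simp add: field_simps power2_eq_square)
  then have dw: "real d * (4 * real j * real e * real m)^2 = 4 * real e * real m * (real k^2 * D)"
    by (simp add: power2_eq_square algebra_simps)
  have "e^2 \<le> m^2 + 2 * e * m" using \<open>e < m\<close> by (simp add: power_mono trans_le_add1 less_imp_le)
  then have r: "real r^2 = (real k * (D - 2 * real e * real m))^2"
    and u: "real u = real k * (real m^2 + real e^2)"
    and s: "real s = real k * (D + 2 * real e * real m)"
    unfolding r_def R_def u_def s_def D_def by (simp_all add: of_nat_diff)
  have "real u^2 = real r^2 + real d * (4 * real j * real e * real m)^2"
    "real s^2 = real u^2 + real d * (4 * real j * real e * real m)^2"
    unfolding dw r u s D_def by (simp_all add: power2_eq_square algebra_simps)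
  then have "real (u^2) = real (r^2 + d * (4 * j * e * m)^2)"
    "real (s^2) = real (u^2 + d * (4 * j * e * m)^2)" by simp_all
  moreover have "4 * j * e * m > 0" using assms by simp
  ultimately show ?thesis unfolding square_progression_def of_nat_eq_iff by blast
qed

locale nonresidue_minus_one_two_prime =
  fixes d :: nat
  assumes prime: "prime d" and gt_2: "d > 2"
    and dvd_of_dvd_sum_squares: "d dvd x^2 + y^2 \<Longrightarrow> d dvd x"
    and dvd_of_square_cong_double: "[y^2 = 2 * x^2] (mod d) \<Longrightarrow> d dvd x"
begin

lemma not_dvd_both_if_coprime:
  assumes "coprime a b" "d dvd a" "d dvd b"
  shows False
  using assms prime by (metis coprime_common_divisor not_prime_unit)

lemma pythagorean_legs_not_twice_square_and_d_square:
  fixes \<alpha> \<beta> u \<gamma> \<delta> :: nat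
  assumes cp: "coprime \<alpha> \<beta>" and pyth: "u^2 = \<alpha>^2 + \<beta>^2" and "odd u"
    and \<alpha>: "\<alpha> = 2 * \<gamma>^2" and \<beta>: "\<beta> = d * \<delta>^2"
  shows False
proof -
  obtain p where u: "u = \<beta> + 2 * p" and prod: "p * (p + \<beta>) = (\<gamma>^2)^2"
    and cp_p: "coprime p (p + \<beta>)"
    using coprime_pythagorean_halves[of \<beta> \<alpha> u "\<gamma>^2"] cp pyth \<open>odd u\<close> \<alpha>
    by (auto simp: coprime_commute add.commute)
  have prod4: "p * (p + \<beta>) = \<gamma>^4" using prod by (simp flip: power_mult)
  obtain N M where N: "p = N^4" and M: "p + \<beta> = M^4"
    using coprime_mult_eq_power_nat[OF cp_p prod4] cp_p prod4
      coprime_mult_eq_power_nat[of "p + \<beta>" p \<gamma> 4]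
    by (auto simp: ac_simps coprime_commute)
  have cMN: "coprime M N" using cp_p N M by (simp add: coprime_commute)
  have "N^4 \<le> M^4" using N M by (metis le_add1)
  then have "N \<le> M" by simp
  then have "N^2 \<le> M^2" by (rule power_mono) simp
  then obtain X where X: "M^2 = N^2 + X" using le_Suc_ex by blast
  define Y where "Y = M^2 + N^2"
  have "M^4 = (M^2)^2" by (simp flip: power_mult)
  also have "\<dots> = (N^2 + X)^2" using X by simp
  also have "\<dots> = N^4 + X * Y"
    using X unfolding Y_def by (simp add: power2_eq_square power4_eq_xxxx algebra_simps)
  finally have "M^4 = N^4 + X * Y" .
  then have XY: "X * Y = d * \<delta>^2" using N M \<beta> by simp
  have "u = M^4 + N^4" using u N M by simp
  then have "odd Y" using \<open>odd u\<close> unfolding Y_def by (simp flip: power_mult)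
  moreover have "coprime (M^2) (N^2)" using cMN by simp
  ultimately have "coprime (M^2 - N^2) Y"
    using coprime_diff_add_if_odd \<open>N^2 \<le> M^2\<close> unfolding Y_def by blast
  then have "coprime X Y" using X by simp
  have "d dvd X * Y" using XY by simp
  then consider "d dvd Y" | "d dvd X" using prime prime_dvd_mult_iff by blast
  then show False
  proof cases
    case 1
    then have "d dvd M^2 + N^2" "d dvd N^2 + M^2" unfolding Y_def by (simp_all add: add.commute)
    then show False using dvd_of_dvd_sum_squares not_dvd_both_if_coprime cMN by blast
  next
    case 2
    then obtain y x where Y: "Y = y^2" and "X = d * x^2"
      using coprime_mult_eq_mult_square[of Y X d \<delta>] \<open>coprime X Y\<close> XY prime prime_gt_0_nat
      by (auto simp: ac_simps coprime_commute)
    then have sum: "y^2 + d * x^2 = 2 * M^2" using X unfolding Y_def by simp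
    have "[y^2 = y^2 + d * x^2] (mod d)" by (simp add: cong_def)
    then have "[y^2 = 2 * M^2] (mod d)" using sum by simp
    then have "d dvd M" by (rule dvd_of_square_cong_double)
    then have "d dvd y^2 + d * x^2" using sum by (simp add: power2_eq_square)
    then have "d dvd y^2" by (simp add: dvd_add_left_iff)
    then have "d dvd N^2 + M^2" using Y unfolding Y_def by (simp add: add.commute)
    then show False using dvd_of_dvd_sum_squares \<open>d dvd M\<close> not_dvd_both_if_coprime cMN by blast
  qed
qed

lemma pythagorean_square_leg_descends:
  fixes \<alpha> \<beta> u \<gamma> \<delta> :: nat
  assumes cp: "coprime \<alpha> \<beta>" and pyth: "u^2 = \<alpha>^2 + \<beta>^2" and "odd u"
    and \<alpha>: "\<alpha> = \<gamma>^2" and \<beta>: "\<beta> = 2 * d * \<delta>^2" and "\<delta> > 0"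
  shows "\<exists>w r u s. 0 < w \<and> w \<le> \<delta> \<and> square_progression d w r u s"
proof -
  obtain p where u: "u = \<alpha> + 2 * p" and prod: "p * (p + \<alpha>) = (d * \<delta>^2)^2"
    and cp_p: "coprime p (p + \<alpha>)"
    using coprime_pythagorean_halves[OF cp pyth \<open>odd u\<close>, of "d * \<delta>^2"] \<beta> by auto
  have prod4: "p * (p + \<alpha>) = d^2 * \<delta>^4" using prod by (simp add: power_mult_distrib flip: power_mult)
  have "d dvd p"
  proof (rule ccontr)
    assume "\<not> d dvd p"
    moreover have "d dvd p * (p + \<alpha>)" using prod4 by (simp add: power2_eq_square)
    ultimately have "d dvd p + \<alpha>" using prime prime_dvd_mult_iff by blast
    then obtain M where M: "p = M^4"
      using coprime_mult_eq_prime_square_mult_fourth_power[OF prime, of "p + \<alpha>" p \<delta>] cp_p prod4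
      by (auto simp: ac_simps coprime_commute)
    have "p + \<alpha> = (M^2)^2 + \<gamma>^2" using M \<alpha> by (simp flip: power_mult)
    then have "d dvd M^2" using \<open>d dvd p + \<alpha>\<close> dvd_of_dvd_sum_squares by metis
    then have "d dvd M^2 * M^2" by (rule dvd_mult2)
    then have "d dvd p" using M by simp
    with \<open>\<not> d dvd p\<close> show False ..
  qed
  then obtain N M where N: "p = d^2 * N^4" and M: "p + \<alpha> = M^4"
    using coprime_mult_eq_prime_square_mult_fourth_power[OF prime cp_p prod4] by blast
  have "d > 0" using prime prime_gt_0_nat by blast
  then have "p > 0" using prod4 \<open>\<delta> > 0\<close> by (cases "p = 0") auto
  then have "N > 0" using N by (cases "N = 0") auto
  have "p \<le> p * (p + \<alpha>)" using \<open>p > 0\<close> by simp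
  then have "d^2 * N^4 \<le> d^2 * \<delta>^4" unfolding N[symmetric] prod4[symmetric] .
  then have "N^4 \<le> \<delta>^4" using \<open>d > 0\<close> by simp
  then have "N \<le> \<delta>" by simp
  have "(M^2)^2 = (d * N^2)^2 + \<gamma>^2"
    using N M \<alpha> by (simp add: power_mult_distrib flip: power_mult)
  moreover have "coprime (M^2) (d * N^2)"
    using cp_p N M by (simp add: coprime_commute power_mult_distrib flip: power_mult)
  moreover have "u = (M^2)^2 + (d * N^2)^2" using u N M by (simp add: power_mult_distrib flip: power_mult)
  then have "odd (M^2 + d * N^2)" using \<open>odd u\<close> by simp
  ultimately obtain x y where "M^2 = x^2 + d * N^2" "y^2 = M^2 + d * N^2"
    using coprime_pythagorean_sum_diff_squares by blast
  then have "square_progression d N x M y" unfolding square_progression_def by simp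
  then show ?thesis using \<open>N > 0\<close> \<open>N \<le> \<delta>\<close> by blast
qed

lemma pythagorean_descends:
  fixes \<alpha> \<beta> u c :: nat
  assumes cp: "coprime \<alpha> \<beta>" and pyth: "u^2 = \<alpha>^2 + \<beta>^2" and "odd u"
    and prod: "\<alpha> * \<beta> = 2 * d * c^2" and "d dvd \<beta>" and "c > 0"
  shows "\<exists>w r u s. 0 < w \<and> w < 2 * c \<and> square_progression d w r u s"
proof -
  have "d > 0" "odd d" using prime gt_2 prime_odd_nat by auto
  have "2 dvd \<alpha> * \<beta>" using prod by simp
  then consider "2 dvd \<beta>" | "2 dvd \<alpha>" using prime_dvd_mult_iff two_is_prime_nat by blast
  then show ?thesis
  proof cases
    case 1
    then have "2 * d dvd \<beta>" using \<open>d dvd \<beta>\<close> \<open>odd d\<close> by (intro divides_mult) auto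
    then obtain \<gamma> \<delta> where \<alpha>: "\<alpha> = \<gamma>^2" and \<beta>: "\<beta> = 2 * d * \<delta>^2"
      using coprime_mult_eq_mult_square[OF cp, of "2 * d" c] prod \<open>d > 0\<close> by auto
    have "(2 * d) * (\<gamma> * \<delta>)^2 = (2 * d) * c^2"
      using prod \<alpha> \<beta> by (simp add: power_mult_distrib algebra_simps)
    then have "\<gamma> * \<delta> = c" using \<open>d > 0\<close> by (simp add: power2_eq_iff_nonneg)
    then have "\<delta> > 0" "\<delta> < 2 * c" using \<open>c > 0\<close> by (auto intro: le_less_trans[of _ c] simp: Suc_le_eq)
    then show ?thesis
      using pythagorean_square_leg_descends[OF cp pyth \<open>odd u\<close> \<alpha> \<beta>] by force
  next
    case 2
    then obtain \<alpha>' where \<alpha>: "\<alpha> = 2 * \<alpha>'" by blast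
    obtain \<beta>' where \<beta>: "\<beta> = d * \<beta>'" using \<open>d dvd \<beta>\<close> by blast
    have "\<alpha>' * \<beta>' = c^2" "coprime \<alpha>' \<beta>'" using prod cp \<alpha> \<beta> \<open>d > 0\<close> by (simp_all add: algebra_simps)
    then obtain \<gamma> \<delta> where "\<alpha>' = \<gamma>^2" "\<beta>' = \<delta>^2"
      using coprime_mult_eq_power_nat[of \<alpha>' \<beta>' c 2] coprime_mult_eq_power_nat[of \<beta>' \<alpha>' c 2]
      by (auto simp: ac_simps coprime_commute)
    then show ?thesis
      using pythagorean_legs_not_twice_square_and_d_square[OF cp pyth \<open>odd u\<close>] \<alpha> \<beta> by blast
  qed
qed

lemma coprime_square_progression_descends:
  assumes "coprime u w" "w > 0" and sp: "square_progression d w r u s"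
  shows "\<exists>w' r' u' s'. 0 < w' \<and> w' < w \<and> square_progression d w' r' u' s'"
proof -
  have "even w" using square_progression_even[OF _ sp] prime gt_2 prime_odd_nat by blast
  then obtain c where w: "w = 2 * c" by blast
  have "c > 0" "coprime u c" using \<open>w > 0\<close> \<open>coprime u w\<close> w by auto
  have "odd u" using \<open>coprime u w\<close> \<open>even w\<close> \<open>w > 0\<close> by (metis coprime_common_divisor even_zero odd_one)
  obtain \<alpha> \<beta> where cp: "coprime \<alpha> \<beta>" and pyth: "u^2 = \<alpha>^2 + \<beta>^2" and prod: "\<alpha> * \<beta> = 2 * d * c^2"
    using square_progression_pythagorean[OF prime \<open>odd u\<close> \<open>coprime u c\<close> \<open>c > 0\<close>] sp w by blast
  have "d dvd \<alpha> * \<beta>" using prod by simp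
  then consider "d dvd \<beta>" | "d dvd \<alpha>" using prime prime_dvd_mult_iff by blast
  then show ?thesis
  proof cases
    case 1
    then show ?thesis using pythagorean_descends[OF cp pyth \<open>odd u\<close> prod _ \<open>c > 0\<close>] w by blast
  next
    case 2
    have "coprime \<beta> \<alpha>" "u^2 = \<beta>^2 + \<alpha>^2" "\<beta> * \<alpha> = 2 * d * c^2"
      using cp pyth prod by (simp_all add: coprime_commute ac_simps)
    then show ?thesis using pythagorean_descends[OF _ _ \<open>odd u\<close> _ 2 \<open>c > 0\<close>] w by blast
  qed
qed

theorem no_square_progression:
  assumes "w > 0"
  shows "\<not> square_progression d w r u s"
  using assms
proof (induction w arbitrary: r u s rule: less_induct)
  case (less w)
  show ?case
  proof
    assume sp: "square_progression d w r u s"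
    show False
    proof (cases "coprime u w")
      case True
      then show False using coprime_square_progression_descends[OF True \<open>w > 0\<close> sp] less.IH by blast
    next
      case False
      define g where "g = gcd u w"
      have "g > 1" using False \<open>w > 0\<close> unfolding g_def
        by (metis coprime_iff_gcd_eq_1 gcd_pos_nat less_one nat_neq_iff)
      have "g dvd w" unfolding g_def by simp
      then have "0 < w div g" "w div g < w" using \<open>g > 1\<close> \<open>w > 0\<close>
        by (auto simp: dvd_div_eq_0_iff)
      moreover have "square_progression d (w div g) (r div g) (u div g) (s div g)"
        using square_progression_div[OF sp] unfolding g_def by simp
      ultimately show False using less.IH by blast
    qed
  qed
qed

end

lemma nonresidue_minus_one_two_primeI:
  assumes "prime d" "d > 2" "in_res (-1) d (QNR d)" "in_res 2 d (QNR d)"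
  shows "nonresidue_minus_one_two_prime d"
proof
  fix x y :: nat
  show "d dvd x" if "d dvd x^2 + y^2"
  proof -
    have "int d dvd int (x^2 + y^2)" using that by (simp only: int_dvd_int_iff)
    then have "[int y^2 = -1 * int x^2] (mod int d)" by (simp add: cong_iff_dvd_diff add.commute)
    then have "int d dvd int x" by (rule nonresidue_square_cong_imp_dvd[OF assms(1,3)])
    then show ?thesis by simp
  qed
  show "d dvd x" if "[y^2 = 2 * x^2] (mod d)"
  proof -
    have "[int y^2 = 2 * int x^2] (mod int d)"
      using that by (simp flip: cong_int_iff)
    then have "int d dvd int x" by (rule nonresidue_square_cong_imp_dvd[OF assms(1,4)])
    then show ?thesis by simp
  qed
qed (use assms in auto)

theorem lemma11:
  fixes d :: nat
  assumes "prime d" and "d > 2"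
    and "in_res (-1) d (QNR d)" and "in_res 2 d (QNR d)"
  shows "\<not> (\<exists>k j m e :: nat. k > 0 \<and> j > 0 \<and> coprime m e \<and> m > e \<and> e > 0 \<and>
            (real d = (real k / (2 * real j))^2 * ((real m ^ 2 - real e ^ 2) / (real e * real m))))"
proof -
  interpret nonresidue_minus_one_two_prime d
    by (rule nonresidue_minus_one_two_primeI[OF assms])
  show ?thesis
    using rational_solution_square_progression no_square_progression by blast
qed

end
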